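(* Let $G_w$ be a half wheel graph with center $w_c$ and outer nodes $w_1,\dots,w_n$, i.e., a directed graph on these nodes with exactly one edge (of arbitrary orientation) between $w_c$ and $w_k$ for each $k\in\{1,\dots,n\}$ and exactly one edge (of arbitrary orientation) between $w_k$ and $w_{k+1}$ for each $k\in\{1,\dots,n-1\}$. Let $G^{\mathcal X}_w$ be any extraction order of $G_w$ rooted at $w_c$, and let $\mathrm{VC}=\{w_k:(w_{k-1},w_k)\in E^{\mathcal X}_w\text{ or }(w_{k+1},w_k)\in E^{\mathcal X}_w\}$. Then $\mathrm{ew}_{\mathcal X}(G^{\mathcal X}_w)=|\mathrm{VC}|+1$.
   Context: An extraction order of a directed graph $G=(V,E)$ is a rooted directed acyclic graph $G^{\mathcal X}=(V,E^{\mathcal X},s)$ in which every node is reachable from $s$ and $E^{\mathcal X}$ is obtained from $E$ by reversing some (possibly no) edges. A confluence from $a$ to $b$ is a pair of directed paths in $E^{\mathcal X}$ from $a$ to $b$ sharing no node other than $a,b$. For $e\in E^{\mathcal X}$, its label set $\mathcal L_e$ is the set of nodes $b$ such that $e$ lies on some confluence with target $b$. Each node's outgoing edges are partitioned into bags: classes of the equivalence relation generated by $e\sim e'$ iff $\mathcal L_e\cap\mathcal L_{e'}\neq\emptyset$; bag label set $\mathcal L_B=\bigcup_{e\in B}\mathcal L_e$. The extraction width is $\mathrm{ew}_{\mathcal X}(G^{\mathcal X})=1+\max|\mathcal L_B|$ over all bags of all nodes. *)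

theory Defs
  imports Main
begin

definition dpath :: "('a \<times> 'a) set \<Rightarrow> 'a \<Rightarrow> 'a \<Rightarrow> 'a list \<Rightarrow> bool" where
  "dpath EXo a b p \<longleftrightarrow> length p \<ge> 2 \<and> hd p = a \<and> last p = b \<and> distinct p \<and>
     (\<forall>i. Suc i < length p \<longrightarrow> (p ! i, p ! Suc i) \<in> EXo)"

definition path_edges :: "'a list \<Rightarrow> ('a \<times> 'a) set" where
  "path_edges p = set (zip p (tl p))"

definition extraction_order :: "'a set \<Rightarrow> ('a \<times> 'a) set \<Rightarrow> ('a \<times> 'a) set \<Rightarrow> 'a \<Rightarrow> bool" where
  "extraction_order V E EXo s \<longleftrightarrow>
     s \<in> V \<and>
     (\<exists>R \<subseteq> E. EXo = (E - R) \<union> R\<inverse>) \<and>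
     acyclic EXo \<and>
     (\<forall>v\<in>V. (s, v) \<in> EXo\<^sup>*)"

definition confluence :: "('a \<times> 'a) set \<Rightarrow> 'a \<Rightarrow> 'a \<Rightarrow> 'a list \<Rightarrow> 'a list \<Rightarrow> bool" where
  "confluence EXo a b p1 p2 \<longleftrightarrow> dpath EXo a b p1 \<and> dpath EXo a b p2 \<and> p1 \<noteq> p2 \<and>
     set p1 \<inter> set p2 \<subseteq> {a, b}"

definition label_set :: "('a \<times> 'a) set \<Rightarrow> ('a \<times> 'a) \<Rightarrow> 'a set" where
  "label_set EXo e = {b. \<exists>a p1 p2. confluence EXo a b p1 p2 \<and>
                         (e \<in> path_edges p1 \<or> e \<in> path_edges p2)}"

definition out_edges :: "('a \<times> 'a) set \<Rightarrow> 'a \<Rightarrow> ('a \<times> 'a) set" where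
  "out_edges EXo v = {e \<in> EXo. fst e = v}"

definition bag_rel :: "('a \<times> 'a) set \<Rightarrow> 'a \<Rightarrow> (('a \<times> 'a) \<times> ('a \<times> 'a)) set" where
  "bag_rel EXo v = {(e, e'). e \<in> out_edges EXo v \<and> e' \<in> out_edges EXo v \<and>
                            label_set EXo e \<inter> label_set EXo e' \<noteq> {}}"

definition bags :: "('a \<times> 'a) set \<Rightarrow> 'a \<Rightarrow> ('a \<times> 'a) set set" where
  "bags EXo v = out_edges EXo v // ((bag_rel EXo v \<union> (bag_rel EXo v)\<inverse>)\<^sup>*)"

definition bag_label_set :: "('a \<times> 'a) set \<Rightarrow> ('a \<times> 'a) set \<Rightarrow> 'a set" where
  "bag_label_set EXo B = (\<Union>e\<in>B. label_set EXo e)"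

text \<open>Extraction width; the maximum over an empty family of bags is taken to be 0.\<close>
definition extraction_width :: "'a set \<Rightarrow> ('a \<times> 'a) set \<Rightarrow> nat" where
  "extraction_width V EXo =
     1 + Max ({0} \<union> {card (bag_label_set EXo B) | B v. v \<in> V \<and> B \<in> bags EXo v})"

definition half_wheel :: "'a set \<Rightarrow> ('a \<times> 'a) set \<Rightarrow> 'a \<Rightarrow> (nat \<Rightarrow> 'a) \<Rightarrow> nat \<Rightarrow> bool" where
  "half_wheel V E wc w n \<longleftrightarrow>
     V = insert wc (w ` {1..n}) \<and> inj_on w {1..n} \<and> wc \<notin> w ` {1..n} \<and>
     (\<forall>k\<in>{1..n}. ((wc, w k) \<in> E) \<noteq> ((w k, wc) \<in> E)) \<and>
     (\<forall>k\<in>{1..<n}. ((w k, w (Suc k)) \<in> E) \<noteq> ((w (Suc k), w k) \<in> E)) \<and>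
     E \<subseteq> {(wc, w k) | k. k \<in> {1..n}} \<union> {(w k, wc) | k. k \<in> {1..n}}
        \<union> {(w k, w (Suc k)) | k. k \<in> {1..<n}} \<union> {(w (Suc k), w k) | k. k \<in> {1..<n}}"

end

theory Submission
  imports Defs
begin

text \<open>In an extraction order rooted at the centre of a half wheel, every spoke leaves the
  centre, so the centre has no incoming edge. Hence the last edge of any confluence path other
  than a single spoke enters its target from an outer node: every label is a node of VC. Conversely,
  a node of VC with in-neighbour w j lies on the triangle confluence formed by the spokes to w j
  and to itself, so it labels its own spoke; and since consecutive outer nodes are joined by a rim
  edge, consecutive spokes share a label. All spokes thus form one bag whose label set is VC.\<close>

lemma acyclic_no_edge_back:
  assumes "acyclic r" and "(s, y) \<in> r\<^sup>*"
  shows "(y, s) \<notin> r"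
proof
  assume "(y, s) \<in> r"
  with assms(2) have "(s, s) \<in> r\<^sup>+" by (rule rtrancl_into_trancl1)
  with assms(1) show False unfolding acyclic_def by blast
qed

lemma dpath_pred_not_source:
  assumes dp: "dpath r a b p" and ne: "p \<noteq> [s, b]" and no_in: "\<And>y. (y, s) \<notin> r"
  shows "\<exists>x. x \<noteq> s \<and> (x, b) \<in> r"
proof -
  define m where "m = length p"
  have m2: "m \<ge> 2" and edge: "\<And>i. Suc i < m \<Longrightarrow> (p ! i, p ! Suc i) \<in> r"
    using dp unfolding dpath_def m_def by auto
  have "p \<noteq> []" using m2 unfolding m_def by auto
  then have "p ! (m - 1) = b"
    using dp unfolding dpath_def m_def by (simp add: last_conv_nth)
  then have last_edge: "(p ! (m - 2), b) \<in> r"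
    using edge[of "m - 2"] m2 by (simp add: Suc_diff_Suc numeral_2_eq_2)
  show ?thesis
  proof (cases "p ! (m - 2) = s")
    case False
    with last_edge show ?thesis by blast
  next
    case True
    have "m \<noteq> 2"
    proof
      assume "m = 2"
      then have "p = [p ! 0, p ! 1]"
        unfolding m_def by (cases p; cases "tl p") auto
      with True \<open>m = 2\<close> \<open>p ! (m - 1) = b\<close> ne show False by simp
    qed
    then have "(p ! (m - 3), p ! (m - 2)) \<in> r"
      using edge[of "m - 3"] m2 by (simp add: Suc_diff_Suc numeral_2_eq_2 numeral_3_eq_3)
    with True no_in show ?thesis by blast
  qed
qed

lemma label_set_subset_pred_not_source:
  assumes no_in: "\<And>y. (y, s) \<notin> r"
  shows "label_set r e \<subseteq> {b. \<exists>x. x \<noteq> s \<and> (x, b) \<in> r}"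
proof
  fix b assume "b \<in> label_set r e"
  then obtain a p1 p2 where p1: "dpath r a b p1" and p2: "dpath r a b p2" and "p1 \<noteq> p2"
    unfolding label_set_def confluence_def by blast
  have "\<exists>x. x \<noteq> s \<and> (x, b) \<in> r"
  proof (cases "p1 = [s, b]")
    case True
    with \<open>p1 \<noteq> p2\<close> have "p2 \<noteq> [s, b]" by simp
    from dpath_pred_not_source[OF p2 this no_in] show ?thesis .
  next
    case False
    from dpath_pred_not_source[OF p1 this no_in] show ?thesis .
  qed
  then show "b \<in> {b. \<exists>x. x \<noteq> s \<and> (x, b) \<in> r}" by simp
qed

lemma triangle_in_label_sets:
  assumes "acyclic r" and su: "(s, u) \<in> r" and sv: "(s, v) \<in> r" and uv: "(u, v) \<in> r"
  shows "v \<in> label_set r (s, u)" and "v \<in> label_set r (s, v)"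
proof -
  have distinct: "s \<noteq> u" "s \<noteq> v" "u \<noteq> v"
    using assms acyclic_irrefl[of r] by (auto simp: irrefl_def)
  have c: "confluence r s v [s, u, v] [s, v]"
    unfolding confluence_def dpath_def using distinct su sv uv
    by (auto simp: less_Suc_eq nth_Cons')
  have "(s, u) \<in> path_edges [s, u, v]" "(s, v) \<in> path_edges [s, v]"
    unfolding path_edges_def by auto
  with c show "v \<in> label_set r (s, u)" "v \<in> label_set r (s, v)"
    unfolding label_set_def by blast+
qed

lemma extraction_width_eqI:
  assumes "finite S" and labels: "\<And>e. label_set r e \<subseteq> S"
    and bag: "S \<noteq> {} \<Longrightarrow> \<exists>v\<in>V. \<exists>B\<in>bags r v. S \<subseteq> bag_label_set r B"
  shows "extraction_width V r = card S + 1"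
proof -
  define M where "M = {card (bag_label_set r B) | B v. v \<in> V \<and> B \<in> bags r v}"
  have bag_label_set_subset: "\<And>B. bag_label_set r B \<subseteq> S"
    unfolding bag_label_set_def using labels by blast
  have bounded: "\<And>y. y \<in> {0} \<union> M \<Longrightarrow> y \<le> card S"
    unfolding M_def using bag_label_set_subset card_mono[OF \<open>finite S\<close>] by blast
  have attained: "card S \<in> {0} \<union> M"
  proof (cases "S = {}")
    case False
    with bag obtain v B where "v \<in> V" "B \<in> bags r v" "S \<subseteq> bag_label_set r B" by blast
    with bag_label_set_subset[of B] have "card S = card (bag_label_set r B)"
      by (simp add: subset_antisym)
    with \<open>v \<in> V\<close> \<open>B \<in> bags r v\<close> show ?thesis unfolding M_def by blast
  qed simp
  have "finite ({0} \<union> M)"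
    using bounded by (meson finite_atMost atMost_iff finite_subset subsetI)
  then have "Max ({0} \<union> M) = card S" using bounded attained by (rule Max_eqI)
  then show ?thesis unfolding extraction_width_def M_def by simp
qed

locale half_wheel_extraction_order =
  fixes V :: "'a set" and E EXo :: "('a \<times> 'a) set" and wc :: 'a and w :: "nat \<Rightarrow> 'a" and n :: nat
  assumes half_wheel: "half_wheel V E wc w n"
    and extraction_order: "extraction_order V E EXo wc"
begin

definition VC :: "'a set" where
  "VC = {w k | k. k \<in> {1..n} \<and>
           ((1 < k \<and> (w (k - 1), w k) \<in> EXo) \<or> (k < n \<and> (w (k + 1), w k) \<in> EXo))}"

lemma acyclic_EXo: "acyclic EXo"
  using extraction_order unfolding extraction_order_def by blast

lemma edge_or_reversed_edge: "(x, y) \<in> EXo \<Longrightarrow> (x, y) \<in> E \<or> (y, x) \<in> E"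
  using extraction_order unfolding extraction_order_def by auto

lemma oriented_edge: "(x, y) \<in> E \<Longrightarrow> (x, y) \<in> EXo \<or> (y, x) \<in> EXo"
  using extraction_order unfolding extraction_order_def by auto

lemma edge_endpoints_in_V: "(x, y) \<in> EXo \<Longrightarrow> x \<in> V \<and> y \<in> V"
proof -
  have "E \<subseteq> V \<times> V"
    using half_wheel unfolding half_wheel_def by auto
  then show "(x, y) \<in> EXo \<Longrightarrow> x \<in> V \<and> y \<in> V"
    using edge_or_reversed_edge by blast
qed

lemma no_edge_into_center: "(y, wc) \<notin> EXo"
proof
  assume yc: "(y, wc) \<in> EXo"
  then have "y \<in> V" using edge_endpoints_in_V by blast
  then have "(wc, y) \<in> EXo\<^sup>*"
    using extraction_order unfolding extraction_order_def by blast
  with acyclic_EXo have "(y, wc) \<notin> EXo" by (rule acyclic_no_edge_back)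
  with yc show False by contradiction
qed

lemma spoke_out_of_center: "k \<in> {1..n} \<Longrightarrow> (wc, w k) \<in> EXo"
  using half_wheel oriented_edge no_edge_into_center unfolding half_wheel_def by blast

lemma rim_edge_oriented:
  "k \<in> {1..<n} \<Longrightarrow> (w k, w (Suc k)) \<in> EXo \<or> (w (Suc k), w k) \<in> EXo"
  using half_wheel oriented_edge unfolding half_wheel_def by blast

lemma edge_from_outer_node:
  assumes "(x, y) \<in> EXo" and "x \<noteq> wc"
  shows "\<exists>k\<in>{1..<n}. x = w k \<and> y = w (Suc k) \<or> x = w (Suc k) \<and> y = w k"
proof -
  have "y \<noteq> wc" using assms(1) no_edge_into_center by blast
  with assms half_wheel show ?thesis
    using edge_or_reversed_edge unfolding half_wheel_def by blast
qed

lemma VC_eq_targets_of_outer_nodes: "VC = {y. \<exists>x. x \<noteq> wc \<and> (x, y) \<in> EXo}"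
proof
  show "VC \<subseteq> {y. \<exists>x. x \<noteq> wc \<and> (x, y) \<in> EXo}"
  proof
    fix y assume "y \<in> VC"
    then obtain k where k: "k \<in> {1..n}"
      and in_edge: "1 < k \<and> (w (k - 1), y) \<in> EXo \<or> k < n \<and> (w (k + 1), y) \<in> EXo"
      unfolding VC_def by blast
    obtain j where "j \<in> {1..n}" "(w j, y) \<in> EXo"
    proof (cases "1 < k \<and> (w (k - 1), y) \<in> EXo")
      case True
      with k show ?thesis by (intro that[of "k - 1"]) auto
    next
      case False
      with k in_edge show ?thesis by (intro that[of "k + 1"]) auto
    qed
    moreover have "w j \<noteq> wc" using half_wheel \<open>j \<in> {1..n}\<close> unfolding half_wheel_def by blast
    ultimately show "y \<in> {y. \<exists>x. x \<noteq> wc \<and> (x, y) \<in> EXo}" by blast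
  qed
next
  show "{y. \<exists>x. x \<noteq> wc \<and> (x, y) \<in> EXo} \<subseteq> VC"
  proof clarify
    fix x y assume "x \<noteq> wc" "(x, y) \<in> EXo"
    then obtain k where "k \<in> {1..<n}" "x = w k \<and> y = w (Suc k) \<or> x = w (Suc k) \<and> y = w k"
      using edge_from_outer_node by blast
    with \<open>(x, y) \<in> EXo\<close> show "y \<in> VC"
      unfolding VC_def by (elim disjE conjE) (intro CollectI exI conjI; force)+
  qed
qed

lemma finite_VC: "finite VC"
  by (rule finite_subset[of _ "w ` {1..n}"]) (auto simp: VC_def)

lemma spokes_to_edge_from_outer_node:
  assumes "(x, y) \<in> EXo" and "x \<noteq> wc"
  shows "(wc, x) \<in> EXo" and "(wc, y) \<in> EXo"
proof -
  obtain k where k: "k \<in> {1..<n}" and xy: "x = w k \<and> y = w (Suc k) \<or> x = w (Suc k) \<and> y = w k"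
    using edge_from_outer_node assms by blast
  have "(wc, w k) \<in> EXo" "(wc, w (Suc k)) \<in> EXo"
    using k spoke_out_of_center by simp_all
  with xy show "(wc, x) \<in> EXo" "(wc, y) \<in> EXo" by blast+
qed

lemma rim_edge_target_in_spoke_labels:
  assumes "(x, y) \<in> EXo" and "x \<noteq> wc"
  shows "y \<in> label_set EXo (wc, x)" and "y \<in> label_set EXo (wc, y)"
  using triangle_in_label_sets[OF acyclic_EXo spokes_to_edge_from_outer_node[OF assms] assms(1)] .

lemma consecutive_spokes_bag_rel:
  assumes "k \<in> {1..<n}"
  shows "((wc, w k), (wc, w (Suc k))) \<in> bag_rel EXo wc"
proof -
  have outer: "w k \<noteq> wc" "w (Suc k) \<noteq> wc"
    using half_wheel assms unfolding half_wheel_def by force+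
  have "label_set EXo (wc, w k) \<inter> label_set EXo (wc, w (Suc k)) \<noteq> {}"
    using rim_edge_oriented[OF assms] rim_edge_target_in_spoke_labels outer by blast
  moreover have "(wc, w k) \<in> out_edges EXo wc" "(wc, w (Suc k)) \<in> out_edges EXo wc"
    using assms spoke_out_of_center unfolding out_edges_def by auto
  ultimately show ?thesis unfolding bag_rel_def by simp
qed

lemma spokes_connected:
  assumes "k \<in> {1..n}"
  shows "((wc, w 1), (wc, w k)) \<in> (bag_rel EXo wc \<union> (bag_rel EXo wc)\<inverse>)\<^sup>*"
proof -
  from assms have "1 \<le> k" "k \<le> n" by auto
  then show ?thesis
  proof (induction k rule: dec_induct)
    case (step m)
    then have "((wc, w m), (wc, w (Suc m))) \<in> bag_rel EXo wc"
      using consecutive_spokes_bag_rel by simp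
    with step show ?case by (meson UnI1 rtrancl.rtrancl_into_rtrancl Suc_leD)
  qed simp
qed

lemma VC_in_bag_of_spokes:
  assumes "VC \<noteq> {}"
  shows "\<exists>B\<in>bags EXo wc. VC \<subseteq> bag_label_set EXo B"
proof -
  have "1 \<in> {1..n}" using assms unfolding VC_def by auto
  define B where "B = (bag_rel EXo wc \<union> (bag_rel EXo wc)\<inverse>)\<^sup>* `` {(wc, w 1)}"
  have "B \<in> bags EXo wc"
    unfolding bags_def B_def using spoke_out_of_center[OF \<open>1 \<in> {1..n}\<close>]
    by (intro quotientI) (simp add: out_edges_def)
  moreover have "VC \<subseteq> bag_label_set EXo B"
  proof
    fix y assume y: "y \<in> VC"
    then obtain x where x: "x \<noteq> wc" "(x, y) \<in> EXo" using VC_eq_targets_of_outer_nodes by blast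
    from y obtain k where "k \<in> {1..n}" "y = w k" unfolding VC_def by blast
    then have "(wc, y) \<in> B" unfolding B_def using spokes_connected by blast
    with rim_edge_target_in_spoke_labels(2)[OF x(2,1)] show "y \<in> bag_label_set EXo B"
      unfolding bag_label_set_def by blast
  qed
  ultimately show ?thesis by blast
qed

end

theorem lemma36:
  fixes V :: "'a set" and E EXo :: "('a \<times> 'a) set" and wc :: 'a and w :: "nat \<Rightarrow> 'a" and n :: nat
  assumes "half_wheel V E wc w n"
    and "extraction_order V E EXo wc"
  shows "extraction_width V EXo =
           card {w k | k. k \<in> {1..n} \<and>
                   ((1 < k \<and> (w (k - 1), w k) \<in> EXo) \<or> (k < n \<and> (w (k + 1), w k) \<in> EXo))} + 1"
proof -
  interpret half_wheel_extraction_order V E EXo wc w n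
    using assms by unfold_locales
  have "extraction_width V EXo = card VC + 1"
  proof (rule extraction_width_eqI)
    show "label_set EXo e \<subseteq> VC" for e
      unfolding VC_eq_targets_of_outer_nodes
      by (rule label_set_subset_pred_not_source[OF no_edge_into_center])
    have "wc \<in> V" using assms(2) unfolding extraction_order_def by blast
    with VC_in_bag_of_spokes
    show "VC \<noteq> {} \<Longrightarrow> \<exists>v\<in>V. \<exists>B\<in>bags EXo v. VC \<subseteq> bag_label_set EXo B"
      by blast
  qed (rule finite_VC)
  then show ?thesis unfolding VC_def .
qed

end
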